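(* Let $\sigma$ be an admissible permutation on $\mathbb{Z}$ and $r=(\ldots,r_{-1},r_0,r_1,\ldots)$ be its standard record representation. For any $n\in\mathbb{N}$, let $\sigma_n=(\sigma(-n),\ldots,\sigma(n-1),\sigma(n))$ be the restriction of $\sigma$ to $\llbracket -n,n\rrbracket$ and let $s_n$ be the number of records of $\sigma_n$ smaller or equal than $0$. Then, for any finite $I\subseteq\mathbb{Z}$, there exists $n_0$ such that, for all $n\geq n_0$ we have \begin{align*} \mathrm{RBST}(\sigma)\cap\left(\bigcup_{k\in I}\mathbf{1}^k\mathbb{T}_L\right)=\mathbf{1}^{-s_n}\mathrm{BST}(\sigma_n)\cap\left(\bigcup_{k\in I}\mathbf{1}^k\mathbb{T}_L\right)\,. \end{align*} In words, the redwood tree $\mathrm{RBST}(\sigma)$ and the shifted binary search tree $\mathbf{1}^{-s_n}\mathrm{BST}(\sigma_n)$ are locally equal for $n$ large enough.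
   Context: Notation: $\mathbb{T}=\{\emptyset\}\cup\bigcup_{k\geq1}\{\mathbf{0},\mathbf{1}\}^k$ is the infinite binary tree seen as words on $\{\mathbf{0},\mathbf{1}\}$ ($\emptyset$ = root = empty word); binary trees are prefix-closed subsets of $\mathbb{T}$. For a finite sequence $x=(x_1,\ldots,x_n)$ of distinct values, its binary search tree is $\mathrm{BST}(x)=\emptyset$ if $n=0$, and otherwise $\mathrm{BST}(x)=\{\emptyset\}\cup\mathbf{0}\,\mathrm{BST}(x_-)\cup\mathbf{1}\,\mathrm{BST}(x_+)$, where $x_-$ (resp. $x_+$) is the subsequence of values smaller (resp. larger) than $x_1$, in the same order. A new letter $\Upsilon$ is added as the inverse of $\mathbf{1}$, with the convention $\mathbf{1}^k=\Upsilon^{|k|}$ for $k<0$ and $\mathbf{1}^0=\emptyset$ (so $\mathbf{1}^a\mathbf{1}^b=\mathbf{1}^{a+b}$ for $a,b\in\mathbb{Z}$); $\mathbb{T}_L:=\{\emptyset\}\cup\mathbf{0}\mathbb{T}$ and $\mathbb{Y}:=\bigcup_{k\in\mathbb{Z}}\mathbf{1}^k\mathbb{T}_L$. For $a,b\in\mathbb{Z}$, $\llbracket a,b\rrbracket=\{a,a+1,\ldots,b\}$. A permutation $\sigma$ of $\mathbb{Z}$ is admissible if $|\{i\in\mathbb{N}:\sigma(i)\notin\mathbb{N}\}|+|\{i\in\mathbb{Z}\setminus\mathbb{N}:\sigma(i)\in\mathbb{N}\}|<\infty$. A record index of $\sigma$ is an index $r$ such that $\sigma(r)>\sigma(k)$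 for all $k<r$ ($\sigma(r)$ is then a record); for an admissible $\sigma$ the set of record indices is infinite in both directions. The standard record representation of $\sigma$ is the sequence $(\ldots,r_{-1},r_0,r_1,\ldots)$ listing all record indices of $\sigma$ in strictly increasing order, indexed so that $\sigma(r_0)\leq0<\sigma(r_1)$. For $k\in\mathbb{Z}$, $\sigma[k]=(\sigma(i):\sigma(r_k)<\sigma(i)<\sigma(r_{k+1}))$ is the sequence of images between two consecutive records, in the same order as in $\sigma$. The redwood tree of $\sigma$ is $\mathrm{RBST}(\sigma):=\bigcup_{k\in\mathbb{Z}}\{\mathbf{1}^k\}\cup\mathbf{1}^k\mathbf{0}\,\mathrm{BST}(\sigma[k])\subseteq\mathbb{Y}$. *)

theory Defs
  imports Main
begin

text \<open>Words of the infinite binary tree are bool lists; letter 0 = False, letter 1 = True.\<close>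

function bst :: "int list \<Rightarrow> bool list set" where
  "bst [] = {}"
| "bst (x # xs) = {[]} \<union> (Cons False) ` bst (filter (\<lambda>y. y < x) xs)
                      \<union> (Cons True) ` bst (filter (\<lambda>y. x < y) xs)"
  by pat_completeness auto
termination
  by (relation "measure length") (auto simp: le_imp_less_Suc)

text \<open>Elements of Y are encoded as pairs (k, w) standing for the word 1^k w, with w in T_L,
  i.e. w = [] or w starts with letter 0 (False). This encoding is a bijection onto Y.\<close>

definition in_TL :: "bool list \<Rightarrow> bool" where
  "in_TL w \<longleftrightarrow> w = [] \<or> hd w = False"

definition strips :: "int set \<Rightarrow> (int \<times> bool list) set" where
  "strips I = {(k, w). k \<in> I \<and> in_TL w}"

definition T_to_Y :: "bool list \<Rightarrow> int \<times> bool list" where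
  "T_to_Y w = (int (length (takeWhile id w)), dropWhile id w)"

text \<open>Left multiplication by 1^m of a subset of T, giving a subset of Y.\<close>
definition shiftT :: "int \<Rightarrow> bool list set \<Rightarrow> (int \<times> bool list) set" where
  "shiftT m A = (\<lambda>w. case T_to_Y w of (j, v) \<Rightarrow> (j + m, v)) ` A"

definition admissible :: "(int \<Rightarrow> int) \<Rightarrow> bool" where
  "admissible \<sigma> \<longleftrightarrow> bij \<sigma> \<and>
     finite {i::int. 0 \<le> i \<and> \<sigma> i < 0} \<and> finite {i::int. i < 0 \<and> 0 \<le> \<sigma> i}"

definition record_index :: "(int \<Rightarrow> int) \<Rightarrow> int \<Rightarrow> bool" where
  "record_index \<sigma> r \<longleftrightarrow> (\<forall>k<r. \<sigma> k < \<sigma> r)"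

definition standard_record_rep :: "(int \<Rightarrow> int) \<Rightarrow> (int \<Rightarrow> int) \<Rightarrow> bool" where
  "standard_record_rep \<sigma> r \<longleftrightarrow> strict_mono r \<and> range r = {i. record_index \<sigma> i}
     \<and> \<sigma> (r 0) \<le> 0 \<and> 0 < \<sigma> (r 1)"

definition block :: "(int \<Rightarrow> int) \<Rightarrow> (int \<Rightarrow> int) \<Rightarrow> int \<Rightarrow> int list" where
  "block \<sigma> r k = map \<sigma> (sorted_list_of_set {i. \<sigma> (r k) < \<sigma> i \<and> \<sigma> i < \<sigma> (r (k + 1))})"

definition RBST :: "(int \<Rightarrow> int) \<Rightarrow> (int \<Rightarrow> int) \<Rightarrow> (int \<times> bool list) set" where
  "RBST \<sigma> r = (\<Union>k. {(k, [])} \<union> (\<lambda>w. (k, False # w)) ` bst (block \<sigma> r k))"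

definition restr :: "(int \<Rightarrow> int) \<Rightarrow> nat \<Rightarrow> int list" where
  "restr \<sigma> n = map \<sigma> [- int n .. int n]"

definition s_count :: "(int \<Rightarrow> int) \<Rightarrow> nat \<Rightarrow> nat" where
  "s_count \<sigma> n = card {j \<in> {- int n .. int n}.
       (\<forall>k \<in> {- int n ..< j}. \<sigma> k < \<sigma> j) \<and> \<sigma> j \<le> 0}"

end

theory Submission
  imports Defs
begin

(* The right spine of BST(x) carries the records (left-to-right maxima) of x, and the left
   subtree hanging from the spine node of a record is the BST of the values of x lying between
   that record and the preceding one.  Once the window [-n, n] contains the record indices
   r_m for m between min k 0 and max (k+1) 1, the records of sigma_n from there on are exactly
   the records of sigma, and s_n counts the records of sigma_n that precede r_1; hence sigma(r_m)
   sits at depth s_n + m - 1 of the right spine of BST(sigma_n).  The shift by 1^(-s_n) thus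
   moves the left subtree of the spine node sigma(r_(k+1)) into strip k, and that subtree is
   BST(sigma[k]) as soon as the window also contains the finitely many indices of sigma[k]. *)

function records :: "'a::linorder list \<Rightarrow> 'a list" where
  "records [] = []"
| "records (x # xs) = x # records (filter (\<lambda>y. x < y) xs)"
  by pat_completeness auto
termination
  by (relation "measure length") (auto simp: le_imp_less_Suc)

lemma set_records_subset: "set (records xs) \<subseteq> set xs"
  by (induction xs rule: records.induct) auto

lemma bst_right_spine_iff: "replicate j True \<in> bst xs \<longleftrightarrow> j < length (records xs)"
proof (induction xs arbitrary: j rule: records.induct)
  case (2 x xs)
  then show ?case by (cases j) auto
qed simp

lemma bst_right_spine_left_subtree_iff:
  "replicate j True @ False # u \<in> bst xs \<longleftrightarrow> j < length (records xs) \<and>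
     u \<in> bst (filter (\<lambda>y. (0 < j \<longrightarrow> records xs ! (j - 1) < y) \<and> y < records xs ! j) xs)"
proof (induction xs arbitrary: j rule: records.induct)
  case (2 x xs)
  let ?ys = "filter (\<lambda>y. x < y) xs"
  show ?case
  proof (cases j)
    case 0
    then show ?thesis by (auto intro!: arg_cong[where f = bst] filter_cong)
  next
    case (Suc i)
    have "\<forall>y\<in>set (records ?ys). x < y"
      using set_records_subset[of ?ys] by auto
    then have "x < records ?ys ! (i - 1)" if "i < length (records ?ys)"
      using that by (metis less_imp_diff_less nth_mem)
    then have "filter (\<lambda>y. (0 < i \<longrightarrow> records ?ys ! (i - 1) < y) \<and> y < records ?ys ! i) ?ys
        = filter (\<lambda>y. (0 < j \<longrightarrow> records (x # xs) ! (j - 1) < y) \<and> y < records (x # xs) ! j) (x # xs)"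
      if "i < length (records ?ys)"
      using Suc that by (cases i) (auto simp: filter_filter intro!: filter_cong)
    then show ?thesis
      using "2"[of i] Suc by auto
  qed
qed simp

lemma records_map_sorted:
  fixes js :: "'a::linorder list" and f :: "'a \<Rightarrow> 'b::linorder"
  assumes "sorted_wrt (<) js"
  shows "records (map f js) = map f (filter (\<lambda>j. \<forall>k\<in>set js. k < j \<longrightarrow> f k < f j) js)"
  using assms
proof (induction "length js" arbitrary: js rule: less_induct)
  case less
  show ?case
  proof (cases js)
    case (Cons j js')
    let ?fs = "filter (\<lambda>i. f j < f i) js'"
    have length_fs: "length ?fs < length js"
      using Cons by (simp add: le_imp_less_Suc)
    have sorted_fs: "sorted_wrt (<) ?fs"
      using less.prems Cons by (simp add: sorted_wrt_filter)
    have "records (map f js) = f j # records (map f ?fs)"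
      using Cons by (simp add: filter_map comp_def)
    also have "records (map f ?fs)
        = map f (filter (\<lambda>i. \<forall>k\<in>set ?fs. k < i \<longrightarrow> f k < f i) ?fs)"
      using length_fs sorted_fs by (rule less.hyps)
    also have "filter (\<lambda>i. \<forall>k\<in>set ?fs. k < i \<longrightarrow> f k < f i) ?fs
        = filter (\<lambda>i. \<forall>k\<in>set js. k < i \<longrightarrow> f k < f i) js'"
      using less.prems Cons by (auto simp: filter_filter intro!: filter_cong)
    finally show ?thesis
      using less.prems Cons by (auto dest: order_less_asym)
  qed simp
qed

lemma nth_sorted_list_of_set_card_less:
  fixes A :: "'a::linorder set"
  assumes "finite A" "x \<in> A"
  shows "card {y\<in>A. y < x} < card A" "sorted_list_of_set A ! card {y\<in>A. y < x} = x"
proof -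
  let ?J = "sorted_list_of_set A"
  have sorted: "sorted_wrt (<) ?J" and set_J: "set ?J = A"
    using assms(1) by simp_all
  obtain i where i: "i < length ?J" "?J ! i = x"
    using assms set_J by (metis in_set_conv_nth)
  have less_iff: "?J ! k < ?J ! i \<longleftrightarrow> k < i" if "k < length ?J" for k
    using sorted that i(1) by (metis linorder_neqE_nat order_less_asym sorted_wrt_nth_less)
  have "{y\<in>A. y < x} = (!) ?J ` {..<i}"
  proof (intro set_eqI iffI)
    fix y
    assume y: "y \<in> {y\<in>A. y < x}"
    then obtain k where "k < length ?J" "y = ?J ! k"
      using set_J by (metis (no_types, lifting) in_set_conv_nth mem_Collect_eq)
    then show "y \<in> (!) ?J ` {..<i}"
      using less_iff y i(2) by auto
  next
    fix y
    assume "y \<in> (!) ?J ` {..<i}"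
    then show "y \<in> {y\<in>A. y < x}"
      using i less_iff set_J by auto
  qed
  moreover have "inj_on ((!) ?J) {..<i}"
    using assms(1) i(1) by (intro inj_on_nth) auto
  ultimately have "card {y\<in>A. y < x} = i"
    by (simp add: card_image)
  then show "card {y\<in>A. y < x} < card A" "?J ! card {y\<in>A. y < x} = x"
    using i by simp_all
qed

lemma T_to_Y_eq_iff:
  assumes "in_TL v"
  shows "T_to_Y w = (j, v) \<longleftrightarrow> 0 \<le> j \<and> w = replicate (nat j) True @ v"
proof -
  have v: "takeWhile id v = [] \<and> dropWhile id v = v"
    using assms by (cases v) (auto simp: in_TL_def)
  have "\<forall>b\<in>set (takeWhile id w). b = True"
    by (auto dest: set_takeWhileD)
  then have w: "w = replicate (length (takeWhile id w)) True @ dropWhile id w"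
    by (simp add: replicate_length_same)
  have "T_to_Y (replicate i True @ v) = (int i, v)" for i
    using v by (simp add: T_to_Y_def takeWhile_append dropWhile_append)
  then show ?thesis
    using w by (auto simp: T_to_Y_def)
qed

lemma mem_shiftT_iff:
  assumes "in_TL v"
  shows "(k, v) \<in> shiftT m A \<longleftrightarrow> 0 \<le> k - m \<and> replicate (nat (k - m)) True @ v \<in> A"
proof -
  have "(k, v) = (case T_to_Y w of (j, u) \<Rightarrow> (j + m, u)) \<longleftrightarrow> T_to_Y w = (k - m, v)" for w
    by (cases "T_to_Y w") auto
  then show ?thesis
    by (auto simp: shiftT_def image_iff T_to_Y_eq_iff[OF assms])
qed

definition window_records :: "(int \<Rightarrow> int) \<Rightarrow> nat \<Rightarrow> int set" where
  "window_records \<sigma> n = {j \<in> {- int n .. int n}. \<forall>k \<in> {- int n ..< j}. \<sigma> k < \<sigma> j}"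

lemma finite_window_records: "finite (window_records \<sigma> n)"
  by (rule finite_subset[of _ "{- int n .. int n}"]) (auto simp: window_records_def)

lemma s_count_eq_card_window_records:
  "s_count \<sigma> n = card {j \<in> window_records \<sigma> n. \<sigma> j \<le> 0}"
  by (simp add: s_count_def window_records_def conj_assoc)

lemma records_restr: "records (restr \<sigma> n) = map \<sigma> (sorted_list_of_set (window_records \<sigma> n))"
proof -
  have "filter (\<lambda>j. \<forall>k\<in>set [- int n..int n]. k < j \<longrightarrow> \<sigma> k < \<sigma> j) [- int n..int n]
      = sorted_list_of_set (window_records \<sigma> n)"
    using finite_window_records[of \<sigma> n]
    by (intro sorted_distinct_set_unique) (auto simp: window_records_def sorted_wrt_filter)
  then show ?thesis
    by (simp add: restr_def records_map_sorted)
qed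

lemma window_record_iff_record_index:
  assumes "record_index \<sigma> \<rho>" "- int n \<le> \<rho>" "\<rho> \<le> j"
  shows "(\<forall>k \<in> {- int n ..< j}. \<sigma> k < \<sigma> j) \<longleftrightarrow> record_index \<sigma> j"
proof
  assume window: "\<forall>k \<in> {- int n ..< j}. \<sigma> k < \<sigma> j"
  have "\<sigma> \<rho> \<le> \<sigma> j"
    using window assms(2,3) by (cases "\<rho> = j") (auto intro: less_imp_le)
  then show "record_index \<sigma> j"
    using window assms(1,2) unfolding record_index_def by (meson atLeastLessThan_iff le_less_trans linorder_not_le)
qed (auto simp: record_index_def)

lemma block_eq_filter_restr:
  assumes "{i. \<sigma> (r k) < \<sigma> i \<and> \<sigma> i < \<sigma> (r (k + 1))} \<subseteq> {- int n .. int n}"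
  shows "block \<sigma> r k = filter (\<lambda>y. \<sigma> (r k) < y \<and> y < \<sigma> (r (k + 1))) (restr \<sigma> n)"
proof -
  have "filter (\<lambda>i. \<sigma> (r k) < \<sigma> i \<and> \<sigma> i < \<sigma> (r (k + 1))) [- int n..int n]
      = sorted_list_of_set {i. \<sigma> (r k) < \<sigma> i \<and> \<sigma> i < \<sigma> (r (k + 1))}"
    using assms finite_subset[OF assms]
    by (intro sorted_distinct_set_unique) (auto simp: sorted_wrt_filter)
  then show ?thesis
    by (simp add: block_def restr_def filter_map comp_def)
qed

lemma mem_RBST_iff:
  "(k, []) \<in> RBST \<sigma> r"
  "(k, False # u) \<in> RBST \<sigma> r \<longleftrightarrow> u \<in> bst (block \<sigma> r k)"
  by (auto simp: RBST_def)

(* Admissibility of sigma is only needed through its injectivity, which makes each sigma[k]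
   finite. *)
locale record_representation =
  fixes \<sigma> r :: "int \<Rightarrow> int"
  assumes inj: "inj \<sigma>" and rep: "standard_record_rep \<sigma> r"
begin

lemma r_less_iff [simp]: "r i < r j \<longleftrightarrow> i < j"
  and r_le_iff [simp]: "r i \<le> r j \<longleftrightarrow> i \<le> j"
  and r_eq_iff [simp]: "r i = r j \<longleftrightarrow> i = j"
  using rep by (simp_all add: standard_record_rep_def strict_mono_less strict_mono_less_eq strict_mono_eq)

lemma record_index_iff_mem_range: "record_index \<sigma> j \<longleftrightarrow> j \<in> range r"
  using rep by (simp add: standard_record_rep_def)

lemma sigma_r0_nonpos: "\<sigma> (r 0) \<le> 0"
  and sigma_r1_pos: "0 < \<sigma> (r 1)"
  using rep by (simp_all add: standard_record_rep_def)

lemma less_record_value: "k < r i \<Longrightarrow> \<sigma> k < \<sigma> (r i)"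
  using record_index_iff_mem_range[of "r i"] by (simp add: record_index_def)

lemma finite_block_indices: "finite {i. \<sigma> (r k) < \<sigma> i \<and> \<sigma> i < \<sigma> (r (k + 1))}"
  using finite_vimageI[OF finite_greaterThanLessThan_int inj] by (simp add: vimage_def)

lemma window_records_below_r:
  assumes "- int n \<le> r m'" "r m \<le> int n" "m' \<le> m"
  shows "{j \<in> window_records \<sigma> n. j < r m} = {j \<in> window_records \<sigma> n. j < r m'} \<union> r ` {m'..<m}"
proof -
  have window_iff: "j \<in> window_records \<sigma> n \<longleftrightarrow> j \<in> range r" if "r m' \<le> j" "j \<le> int n" for j
    using window_record_iff_record_index[of \<sigma> "r m'" n j] record_index_iff_mem_range that assms(1)
    by (auto simp: window_records_def)
  show ?thesis
  proof (intro set_eqI iffI)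
    fix j
    assume j: "j \<in> {j \<in> window_records \<sigma> n. j < r m}"
    show "j \<in> {j \<in> window_records \<sigma> n. j < r m'} \<union> r ` {m'..<m}"
    proof (cases "j < r m'")
      case False
      then obtain i where "j = r i"
        using j window_iff assms(2) by fastforce
      then show ?thesis
        using j False by auto
    qed (use j in simp)
  next
    fix j
    assume "j \<in> {j \<in> window_records \<sigma> n. j < r m'} \<union> r ` {m'..<m}"
    then show "j \<in> {j \<in> window_records \<sigma> n. j < r m}"
    proof
      assume "j \<in> {j \<in> window_records \<sigma> n. j < r m'}"
      then show ?thesis
        using assms(3) by (auto intro: order.strict_trans2)
    next
      assume "j \<in> r ` {m'..<m}"
      then obtain i where "j = r i" "m' \<le> i" "i < m"
        by auto
      moreover have "r i \<le> int n"
        using \<open>i < m\<close> assms(2) by (meson less_imp_le order_trans r_le_iff)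
      ultimately show ?thesis
        using window_iff[of j] by auto
    qed
  qed
qed

lemma card_window_records_below_r:
  assumes "- int n \<le> r m'" "r m \<le> int n" "m' \<le> m"
  shows "card {j \<in> window_records \<sigma> n. j < r m} = card {j \<in> window_records \<sigma> n. j < r m'} + nat (m - m')"
proof -
  have "inj r"
    by (simp add: inj_on_def)
  then show ?thesis
    unfolding window_records_below_r[OF assms]
    by (subst card_Un_disjoint) (auto simp: finite_window_records card_image inj_on_subset)
qed

lemma r_mem_window_records:
  assumes "- int n \<le> r m" "r m \<le> int n"
  shows "r m \<in> window_records \<sigma> n"
  using assms less_record_value by (simp add: window_records_def)

lemma window_records_nonpos_eq_below_r1:
  assumes "- int n \<le> r 0" "r 1 \<le> int n"
  shows "{j \<in> window_records \<sigma> n. \<sigma> j \<le> 0} = {j \<in> window_records \<sigma> n. j < r 1}"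
proof (intro set_eqI iffI)
  have "- int n \<le> r 1"
    using assms(1) by (meson order_trans r_le_iff zero_le_one)
  fix j
  assume j: "j \<in> {j \<in> window_records \<sigma> n. \<sigma> j \<le> 0}"
  show "j \<in> {j \<in> window_records \<sigma> n. j < r 1}"
  proof (rule ccontr)
    assume "j \<notin> {j \<in> window_records \<sigma> n. j < r 1}"
    then have "\<sigma> (r 1) \<le> \<sigma> j"
      using j \<open>- int n \<le> r 1\<close> by (cases "j = r 1") (auto simp: window_records_def intro: less_imp_le)
    then show False
      using j sigma_r1_pos by simp
  qed
next
  fix j
  assume j: "j \<in> {j \<in> window_records \<sigma> n. j < r 1}"
  have "\<sigma> j \<le> 0"
  proof (cases "j < r 0")
    case True
    then show ?thesis
      using less_record_value[of j 0] sigma_r0_nonpos by simp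
  next
    case False
    then have "record_index \<sigma> j"
      using j window_record_iff_record_index[of \<sigma> "r 0" n j] assms(1) record_index_iff_mem_range
      by (auto simp: window_records_def)
    then obtain i where "j = r i"
      using record_index_iff_mem_range by auto
    then have "j = r 0"
      using j False by simp
    then show ?thesis
      using sigma_r0_nonpos by simp
  qed
  then show "j \<in> {j \<in> window_records \<sigma> n. \<sigma> j \<le> 0}"
    using j by simp
qed

lemma card_window_records_below_r_eq_s_count:
  assumes "- int n \<le> r (min m 0)" "r (max m 1) \<le> int n"
  shows "int (card {j \<in> window_records \<sigma> n. j < r m}) = int (s_count \<sigma> n) + m - 1"
proof -
  have "r (min m 0) \<le> r m" "r (min m 0) \<le> r 0" "r (min m 0) \<le> r 1"
    and "r m \<le> r (max m 1)" "r 1 \<le> r (max m 1)"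
    by simp_all
  then have "- int n \<le> r m" "- int n \<le> r 0" "- int n \<le> r 1" "r m \<le> int n" "r 1 \<le> int n"
    using assms by linarith+
  then have s: "s_count \<sigma> n = card {j \<in> window_records \<sigma> n. j < r 1}"
    by (simp add: s_count_eq_card_window_records window_records_nonpos_eq_below_r1)
  show ?thesis
  proof (cases "m \<le> 1")
    case True
    then show ?thesis
      using card_window_records_below_r[of n m 1] \<open>- int n \<le> r m\<close> \<open>r 1 \<le> int n\<close> s by simp
  next
    case False
    then show ?thesis
      using card_window_records_below_r[of n 1 m] \<open>- int n \<le> r 1\<close> \<open>r m \<le> int n\<close> s by simp
  qed
qed

lemma nth_records_restr:
  assumes "- int n \<le> r (min m 0)" "r (max m 1) \<le> int n"
  shows "0 \<le> int (s_count \<sigma> n) + m - 1"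
    and "nat (int (s_count \<sigma> n) + m - 1) < length (records (restr \<sigma> n))"
    and "records (restr \<sigma> n) ! nat (int (s_count \<sigma> n) + m - 1) = \<sigma> (r m)"
proof -
  show "0 \<le> int (s_count \<sigma> n) + m - 1"
    using card_window_records_below_r_eq_s_count[OF assms] by linarith
  have "r (min m 0) \<le> r m" "r m \<le> r (max m 1)"
    by simp_all
  then have "r m \<in> window_records \<sigma> n"
    using assms by (intro r_mem_window_records) linarith+
  moreover have "card {j \<in> window_records \<sigma> n. j < r m} = nat (int (s_count \<sigma> n) + m - 1)"
    using card_window_records_below_r_eq_s_count[OF assms] by linarith
  ultimately show "nat (int (s_count \<sigma> n) + m - 1) < length (records (restr \<sigma> n))"
    and "records (restr \<sigma> n) ! nat (int (s_count \<sigma> n) + m - 1) = \<sigma> (r m)"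
    using nth_sorted_list_of_set_card_less[OF finite_window_records, of "r m" \<sigma> n]
    by (simp_all add: records_restr)
qed

lemma RBST_strip_eq:
  assumes "- int n \<le> r (min k 0)" "r (max (k + 1) 1) \<le> int n"
    and block: "{i. \<sigma> (r k) < \<sigma> i \<and> \<sigma> i < \<sigma> (r (k + 1))} \<subseteq> {- int n .. int n}"
    and "in_TL v"
  shows "(k, v) \<in> RBST \<sigma> r \<longleftrightarrow> (k, v) \<in> shiftT (- int (s_count \<sigma> n)) (bst (restr \<sigma> n))"
proof -
  let ?s = "int (s_count \<sigma> n)" and ?spine = "records (restr \<sigma> n)"
  define p where "p = nat (?s + k)"
  have "r (min k 0) \<le> r (min (k + 1) 0)" "r (max k 1) \<le> r (max (k + 1) 1)"
    by simp_all
  then have window_k: "- int n \<le> r (min k 0)" "r (max k 1) \<le> int n"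
    and window_k1: "- int n \<le> r (min (k + 1) 0)" "r (max (k + 1) 1) \<le> int n"
    using assms(1,2) by linarith+
  have p: "0 < p" "p - 1 = nat (?s + k - 1)" "nat (?s + (k + 1) - 1) = p"
    using nth_records_restr(1)[OF window_k] by (simp_all add: p_def nat_diff_distrib')
  have spine: "p < length ?spine" "?spine ! p = \<sigma> (r (k + 1))" "?spine ! (p - 1) = \<sigma> (r k)"
    using nth_records_restr(2,3)[OF window_k1] nth_records_restr(3)[OF window_k] p by simp_all
  have "(k, v) \<in> shiftT (- ?s) (bst (restr \<sigma> n)) \<longleftrightarrow> replicate p True @ v \<in> bst (restr \<sigma> n)"
    using mem_shiftT_iff[OF \<open>in_TL v\<close>] p(1) by (simp add: p_def add.commute)
  also have "\<dots> \<longleftrightarrow> (k, v) \<in> RBST \<sigma> r"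
  proof (cases v)
    case Nil
    then show ?thesis
      using bst_right_spine_iff spine(1) mem_RBST_iff(1) by simp
  next
    case (Cons c u)
    then have "c = False"
      using \<open>in_TL v\<close> by (simp add: in_TL_def)
    then show ?thesis
      using Cons bst_right_spine_left_subtree_iff[of p u "restr \<sigma> n"] spine p(1)
        block_eq_filter_restr[OF block] mem_RBST_iff(2)
      by simp
  qed
  finally show ?thesis
    by simp
qed

lemma eventually_RBST_strip_eq:
  "\<forall>\<^sub>F n in sequentially. \<forall>v. in_TL v \<longrightarrow>
     ((k, v) \<in> RBST \<sigma> r \<longleftrightarrow> (k, v) \<in> shiftT (- int (s_count \<sigma> n)) (bst (restr \<sigma> n)))"
proof -
  have lower: "\<forall>\<^sub>F n in sequentially. - int n \<le> c" and upper: "\<forall>\<^sub>F n in sequentially. c \<le> int n"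
    for c :: int
    by (auto simp: eventually_sequentially intro!: exI[of _ "nat \<bar>c\<bar>"])
  have "\<forall>\<^sub>F n in sequentially. \<forall>i \<in> {i. \<sigma> (r k) < \<sigma> i \<and> \<sigma> i < \<sigma> (r (k + 1))}. - int n \<le> i \<and> i \<le> int n"
    using finite_block_indices by (intro eventually_ball_finite ballI eventually_conj lower upper)
  with lower[of "r (min k 0)"] upper[of "r (max (k + 1) 1)"] show ?thesis
    by eventually_elim (simp add: RBST_strip_eq subset_iff)
qed

end

theorem proposition2p5:
  fixes \<sigma> r :: "int \<Rightarrow> int" and I :: "int set"
  assumes "admissible \<sigma>"
    and "standard_record_rep \<sigma> r"
    and "finite I"
  shows "\<exists>n0::nat. \<forall>n\<ge>n0.
           RBST \<sigma> r \<inter> strips I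
           = shiftT (- int (s_count \<sigma> n)) (bst (restr \<sigma> n)) \<inter> strips I"
proof -
  interpret record_representation \<sigma> r
    using assms(1,2) by unfold_locales (simp_all add: admissible_def bij_is_inj)
  have "\<forall>\<^sub>F n in sequentially. \<forall>k\<in>I. \<forall>v. in_TL v \<longrightarrow>
      ((k, v) \<in> RBST \<sigma> r \<longleftrightarrow> (k, v) \<in> shiftT (- int (s_count \<sigma> n)) (bst (restr \<sigma> n)))"
    using assms(3) by (intro eventually_ball_finite ballI eventually_RBST_strip_eq)
  then show ?thesis
    unfolding eventually_sequentially strips_def by blast
qed

end
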